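(* Let $q$ be a prime power and $n\ge3$. Then $\chi_{n-1}\!\left(\binom n2\times n,q\right)\ge q^n-1$.
   Context: For positive integers $N\ge n$, $\mathbb{F}_q^{N\times n}$ is the set of $N\times n$ matrices over $\mathbb{F}_q$. An exactly $d$-distance coloring is a map $\Gamma:\mathbb{F}_q^{N\times n}\to\{1,\dots,L\}$ such that $\Gamma(M_1)\ne\Gamma(M_2)$ whenever $\mathrm{Rk}(M_1-M_2)=d$. $\chi_d(N\times n,q)$ denotes the minimum number $L$ of colors in an exactly $d$-distance coloring; here $N=\binom n2$. *)

theory Defs
  imports "Jordan_Normal_Form.DL_Rank"
begin

definition exact_dist_coloring ::
  "nat \<Rightarrow> nat \<Rightarrow> nat \<Rightarrow> nat \<Rightarrow> ('a::field mat \<Rightarrow> nat) \<Rightarrow> bool" where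
  "exact_dist_coloring d N n L \<Gamma> \<longleftrightarrow>
     (\<forall>M \<in> carrier_mat N n. \<Gamma> M \<in> {1..L}) \<and>
     (\<forall>M1 \<in> carrier_mat N n. \<forall>M2 \<in> carrier_mat N n.
        vec_space.rank N (M1 - M2) = d \<longrightarrow> \<Gamma> M1 \<noteq> \<Gamma> M2)"

definition chi :: "'a::field itself \<Rightarrow> nat \<Rightarrow> nat \<Rightarrow> nat \<Rightarrow> nat" where
  "chi _ d N n = (LEAST L. \<exists>\<Gamma> :: 'a mat \<Rightarrow> nat. exact_dist_coloring d N n L \<Gamma>)"

end

theory Submission imports Defs "HOL-Library.FuncSet" begin

text \<open>For \<open>v \<in> \<F>\<^sub>q\<^sup>n\<close> let \<open>M(v)\<close> be the \<open>binom n 2 \<times> n\<close> matrix whose row indexed by a pair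
  \<open>a < b\<close> is \<open>v\<^sub>a e\<^sub>b - v\<^sub>b e\<^sub>a\<close>. The map \<open>v \<mapsto> M(v)\<close> is linear and \<open>v\<close> lies in the kernel
  of \<open>M(v)\<close>, so \<open>rank M(v) < n\<close> for \<open>v \<noteq> 0\<close>; if \<open>v\<^sub>k \<noteq> 0\<close>, the rows of the pairs \<open>{k, c}\<close>
  show that the columns \<open>c \<noteq> k\<close> are independent, so \<open>rank M(v) = n - 1\<close>. Hence
  \<open>M(v) - M(w) = M(v - w)\<close> has rank \<open>n - 1\<close> whenever \<open>v \<noteq> w\<close>, and the \<open>q\<^sup>n\<close> matrices \<open>M(v)\<close>
  receive pairwise distinct colours. This even gives the bound \<open>q\<^sup>n\<close>.\<close>

lemma (in vec_space) rank_le_card_set_cols: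
  assumes "A \<in> carrier_mat n nc"
  shows "rank A \<le> card (set (cols A))"
proof -
  obtain S where S: "maximal S (\<lambda>T. T \<subseteq> set (cols A) \<and> lin_indpt T)"
    using maximal_exists[of "\<lambda>T. T \<subseteq> set (cols A) \<and> lin_indpt T" "card (set (cols A))" "{}"]
    by (meson List.finite_set card_mono empty_iff empty_subsetI finite_lin_indpt2 rev_finite_subset)
  then have "card S \<le> card (set (cols A))" by (simp add: card_mono maximal_def)
  with rank_card_indpt[OF assms S] show ?thesis by simp
qed

lemma (in vec_space) rank_less_ncols_if_kernel:
  assumes A: "A \<in> carrier_mat n nc"
    and v: "v \<in> carrier_vec nc" "v \<noteq> 0\<^sub>v nc" "A *\<^sub>v v = 0\<^sub>v n"
  shows "rank A < nc"
proof (cases "distinct (cols A)")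
  case True
  have "rank A \<noteq> nc"
    using full_rank_lin_indpt[OF A _ True] lin_depI[OF A v True] by blast
  with rank_le_nc[OF A] show ?thesis by simp
next
  case False
  then have "card (set (cols A)) < nc"
    using A card_distinct by (metis card_length cols_length carrier_matD(2) le_neq_implies_less)
  with rank_le_card_set_cols[OF A] show ?thesis by simp
qed

lemma (in vec_space) lin_indpt_cols_if_pivot_rows:
  assumes B: "B \<in> carrier_mat n m"
    and pivot: "\<And>i. i < m \<Longrightarrow> \<exists>r<n. B $$ (r, i) \<noteq> 0 \<and> (\<forall>j<m. j \<noteq> i \<longrightarrow> B $$ (r, j) = 0)"
  shows "distinct (cols B)" "lin_indpt (set (cols B))"
proof -
  show dist: "distinct (cols B)"
  proof (subst distinct_conv_nth, intro allI impI)
    fix i j assume ij: "i < length (cols B)" "j < length (cols B)" "i \<noteq> j"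
    then have "i < m" "j < m" using B by auto
    then obtain r where "r < n" "B $$ (r, i) \<noteq> 0" "B $$ (r, j) = 0"
      using pivot ij(3) by blast
    then have "col B i $ r \<noteq> col B j $ r" using ij B by auto
    then show "cols B ! i \<noteq> cols B ! j" using ij by auto
  qed
  have trivial_kernel: "w = 0\<^sub>v m" if w: "w \<in> carrier_vec m" "B *\<^sub>v w = 0\<^sub>v n" for w
  proof (rule eq_vecI)
    fix i assume "i < dim_vec (0\<^sub>v m)"
    then have i: "i < m" by simp
    then obtain r where r: "r < n" "B $$ (r, i) \<noteq> 0" "\<forall>j<m. j \<noteq> i \<longrightarrow> B $$ (r, j) = 0"
      using pivot by blast
    have "0 = (B *\<^sub>v w) $ r" using w r by simp
    also have "\<dots> = (\<Sum>j = 0..<m. B $$ (r, j) * w $ j)"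
      using r(1) B w(1) by (auto simp: scalar_prod_def intro!: sum.cong)
    also have "\<dots> = B $$ (r, i) * w $ i"
      using i r(3) by (subst sum.remove[of _ i]) (auto intro!: sum.neutral)
    finally show "w $ i = 0\<^sub>v m $ i" using r(2) i by simp
  qed (use w in simp)
  show "lin_indpt (set (cols B))"
  proof
    assume "lin_dep (set (cols B))"
    then obtain w where "w \<in> carrier_vec m" "w \<noteq> 0\<^sub>v m" "B *\<^sub>v w = 0\<^sub>v n"
      using lin_depE[OF B _ dist] by blast
    with trivial_kernel show False by blast
  qed
qed

lemma (in vec_space) rank_ge_if_pivot_rows:
  assumes A: "A \<in> carrier_mat n nc"
    and c: "\<And>i. i < m \<Longrightarrow> c i < nc"
    and pivot: "\<And>i. i < m \<Longrightarrow> \<exists>r<n. A $$ (r, c i) \<noteq> 0 \<and> (\<forall>j<m. j \<noteq> i \<longrightarrow> A $$ (r, c j) = 0)"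
  shows "m \<le> rank A"
proof -
  define B where "B = mat n m (\<lambda>(r, j). A $$ (r, c j))"
  have B: "B \<in> carrier_mat n m" unfolding B_def by simp
  have "\<exists>r<n. B $$ (r, i) \<noteq> 0 \<and> (\<forall>j<m. j \<noteq> i \<longrightarrow> B $$ (r, j) = 0)" if "i < m" for i
    using pivot[OF that] that unfolding B_def by auto
  note indpt = lin_indpt_cols_if_pivot_rows[OF B this]
  have "set (cols B) \<subseteq> set (cols A)"
  proof
    fix x assume "x \<in> set (cols B)"
    then obtain j where j: "j < m" "x = col B j" using B by (auto simp: in_set_conv_nth)
    then have "x = col A (c j)" using A c[OF j(1)] unfolding B_def by (auto intro!: eq_vecI)
    then show "x \<in> set (cols A)" using c[OF j(1)] A by (auto simp: in_set_conv_nth)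
  qed
  from rank_ge_card_indpt[OF A this indpt(2)] show ?thesis
    using distinct_card[OF indpt(1)] B by simp
qed

definition two_subsets :: "nat \<Rightarrow> nat set set" where
  "two_subsets n = {P. P \<subseteq> {..<n} \<and> card P = 2}"

lemma card_two_subsets: "card (two_subsets n) = n choose 2"
  unfolding two_subsets_def using n_subsets[of "{..<n}" 2] by simp

lemma two_subsetsE:
  assumes "P \<in> two_subsets n"
  obtains a b where "P = {a, b}" "a < b" "b < n"
proof -
  obtain a b where ab: "P = {a, b}" "a \<noteq> b"
    using assms unfolding two_subsets_def by (auto simp: card_2_iff)
  show thesis
  proof (cases "a < b")
    case True
    then show thesis using that[of a b] ab assms unfolding two_subsets_def by auto
  next
    case False
    then show thesis using that[of b a] ab assms unfolding two_subsets_def by auto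
  qed
qed

definition pair_matrix :: "(nat \<Rightarrow> nat set) \<Rightarrow> nat \<Rightarrow> nat \<Rightarrow> (nat \<Rightarrow> 'a::field) \<Rightarrow> 'a mat" where
  "pair_matrix h N n v = mat N n (\<lambda>(r, c).
     (if c = Max (h r) then v (Min (h r)) else 0) - (if c = Min (h r) then v (Max (h r)) else 0))"

lemma pair_matrix_carrier: "pair_matrix h N n v \<in> carrier_mat N n"
  unfolding pair_matrix_def by simp

lemma pair_matrix_diff: "pair_matrix h N n v - pair_matrix h N n w = pair_matrix h N n (\<lambda>i. v i - w i)"
  unfolding pair_matrix_def by (rule eq_matI) auto

lemma pair_matrix_mult_vec_self:
  assumes h: "h ` {..<N} \<subseteq> two_subsets n"
  shows "pair_matrix h N n v *\<^sub>v vec n v = 0\<^sub>v N"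
proof (rule eq_vecI)
  fix r assume "r < dim_vec (0\<^sub>v N)"
  then have r: "r < N" by simp
  with h have "h r \<in> two_subsets n" by blast
  then obtain a b where ab: "h r = {a, b}" "a < b" "b < n" by (rule two_subsetsE)
  have "(pair_matrix h N n v *\<^sub>v vec n v) $ r
      = (\<Sum>c = 0..<n. ((if c = b then v a else 0) - (if c = a then v b else 0)) * v c)"
    using r ab unfolding pair_matrix_def by (auto simp: scalar_prod_def intro!: sum.cong)
  also have "\<dots> = (\<Sum>c = 0..<n. if c = b then v a * v c else 0) - (\<Sum>c = 0..<n. if c = a then v b * v c else 0)"
    unfolding sum_subtractf[symmetric] by (intro sum.cong) (auto simp: left_diff_distrib)
  also have "\<dots> = 0" using ab by simp
  finally show "(pair_matrix h N n v *\<^sub>v vec n v) $ r = 0\<^sub>v N $ r" using r by simp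
qed (simp add: pair_matrix_def)

lemma pair_matrix_row_entry:
  assumes "r < N" "c' < n" "h r = {k, c}" "k \<noteq> c" "c' \<noteq> k"
  shows "pair_matrix h N n v $$ (r, c') = (if c' = c then (if k < c then v k else - v k) else 0)"
  using assms unfolding pair_matrix_def by (cases "k < c") (auto simp: max_def min_def)

lemma rank_pair_matrix:
  fixes v :: "nat \<Rightarrow> 'a::field"
  assumes h: "bij_betw h {..<N} (two_subsets n)" and k: "k < n" "v k \<noteq> 0"
  shows "vec_space.rank N (pair_matrix h N n v) = n - 1"
proof -
  let ?A = "pair_matrix h N n v"
  have "vec n v \<noteq> 0\<^sub>v n"
  proof
    assume "vec n v = 0\<^sub>v n"
    then have "vec n v $ k = 0\<^sub>v n $ k" by simp
    with k show False by simp
  qed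
  moreover have "?A *\<^sub>v vec n v = 0\<^sub>v N"
    using bij_betw_imp_surj_on[OF h] by (intro pair_matrix_mult_vec_self) simp
  ultimately have upper: "vec_space.rank N ?A < n"
    by (intro vec_space.rank_less_ncols_if_kernel[OF pair_matrix_carrier]) simp_all
  define skip where "skip = (\<lambda>i::nat. if i < k then i else Suc i)"
  have skip: "skip i \<noteq> k" "skip i = skip j \<longleftrightarrow> i = j" for i j
    unfolding skip_def by auto
  have skip_less: "skip i < n" if "i < n - 1" for i
    using that k unfolding skip_def by auto
  have "n - 1 \<le> vec_space.rank N ?A"
  proof (rule vec_space.rank_ge_if_pivot_rows[OF pair_matrix_carrier skip_less])
    fix i assume i: "i < n - 1"
    have "{k, skip i} \<in> two_subsets n"
      using k(1) skip_less[OF i] skip(1)[of i] unfolding two_subsets_def by auto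
    then have "{k, skip i} \<in> h ` {..<N}" using bij_betw_imp_surj_on[OF h] by simp
    then obtain r where r: "r < N" "h r = {k, skip i}" by auto
    have entry: "?A $$ (r, skip j) = (if j = i then (if k < skip i then v k else - v k) else 0)"
      if "j < n - 1" for j
      using pair_matrix_row_entry[of r N "skip j" n h k "skip i" v, OF r(1) skip_less[OF that] r(2) skip(1)[of i, symmetric] skip(1)[of j]] skip(2)
      by simp
    show "\<exists>r<N. ?A $$ (r, skip i) \<noteq> 0 \<and> (\<forall>j<n - 1. j \<noteq> i \<longrightarrow> ?A $$ (r, skip j) = 0)"
    proof (intro exI conjI allI impI)
      show "?A $$ (r, skip i) \<noteq> 0" using entry[OF i] k(2) by simp
      show "?A $$ (r, skip j) = 0" if "j < n - 1" "j \<noteq> i" for j using entry[OF that(1)] that(2) by simp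
    qed (rule r(1))
  qed
  with upper show ?thesis by simp
qed

lemma finite_carrier_mat: "finite (carrier_mat N n :: 'a::finite mat set)"
proof -
  let ?S = "{0..<N} \<times> {0..<n}"
  have "carrier_mat N n \<subseteq> (\<lambda>f. mat N n f) ` (PiE ?S (\<lambda>_. (UNIV :: 'a set)))"
  proof
    fix A :: "'a mat" assume A: "A \<in> carrier_mat N n"
    then have "A = mat N n (restrict (\<lambda>ij. A $$ ij) ?S)" by (intro eq_matI) auto
    moreover have "restrict (\<lambda>ij. A $$ ij) ?S \<in> PiE ?S (\<lambda>_. UNIV)" by simp
    ultimately show "A \<in> (\<lambda>f. mat N n f) ` (PiE ?S (\<lambda>_. UNIV))" by blast
  qed
  moreover have "finite (PiE ?S (\<lambda>_. (UNIV :: 'a set)))" by (intro finite_PiE) auto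
  ultimately show ?thesis using finite_subset by blast
qed

text \<open>For \<open>d > 0\<close> injective colourings are exact \<open>d\<close>-distance colourings, so \<open>chi\<close> is attained.\<close>

lemma exact_dist_coloring_chi:
  assumes "d > 0"
  shows "\<exists>\<Gamma> :: 'a::{finite,field} mat \<Rightarrow> nat. exact_dist_coloring d N n (chi TYPE('a) d N n) \<Gamma>"
proof -
  let ?C = "carrier_mat N n :: 'a mat set"
  obtain g where g: "bij_betw g ?C {0..<card ?C}"
    using ex_bij_betw_finite_nat[OF finite_carrier_mat] by blast
  have "exact_dist_coloring d N n (card ?C) (\<lambda>M. Suc (g M))"
    unfolding exact_dist_coloring_def
  proof (intro conjI ballI impI)
    fix M assume "M \<in> ?C"
    then show "Suc (g M) \<in> {1..card ?C}" using bij_betw_apply[OF g] by (simp add: Suc_le_eq)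
  next
    fix M1 M2 assume M: "M1 \<in> ?C" "M2 \<in> ?C" and "vec_space.rank N (M1 - M2) = d"
    moreover have "vec_space.rank N (M - M) = 0" if "M \<in> ?C" for M
      using minus_r_inv_mat[OF that] vec_space.rank_0I by metis
    ultimately have "M1 \<noteq> M2" using assms by auto
    then show "Suc (g M1) \<noteq> Suc (g M2)"
      using g M unfolding bij_betw_def inj_on_def by auto
  qed
  then have "\<exists>L \<Gamma>. exact_dist_coloring d N n L (\<Gamma> :: 'a mat \<Rightarrow> nat)" by blast
  then show ?thesis unfolding chi_def by (rule LeastI_ex)
qed

lemma card_le_exact_dist_coloring:
  fixes \<Gamma> :: "'a::{finite,field} mat \<Rightarrow> nat"
  assumes h: "bij_betw h {..<N} (two_subsets n)"
    and \<Gamma>: "exact_dist_coloring (n - 1) N n L \<Gamma>"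
  shows "card (UNIV :: 'a set) ^ n \<le> L"
proof -
  let ?V = "PiE {..<n} (\<lambda>_. (UNIV :: 'a set))"
  let ?f = "\<lambda>v. \<Gamma> (pair_matrix h N n v)"
  have "inj_on ?f ?V"
  proof
    fix v w assume v: "v \<in> ?V" and w: "w \<in> ?V" and same_colour: "?f v = ?f w"
    show "v = w"
    proof (rule ccontr)
      assume "v \<noteq> w"
      then obtain k where "k < n" "v k - w k \<noteq> 0" using PiE_ext[OF v w] by auto
      then have "vec_space.rank N (pair_matrix h N n v - pair_matrix h N n w) = n - 1"
        unfolding pair_matrix_diff by (intro rank_pair_matrix[OF h])
      with \<Gamma> same_colour show False
        using pair_matrix_carrier unfolding exact_dist_coloring_def by blast
    qed
  qed
  moreover have "?f ` ?V \<subseteq> {1..L}"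
    using \<Gamma> pair_matrix_carrier unfolding exact_dist_coloring_def by blast
  ultimately have "card ?V \<le> card {1..L}" by (rule card_inj_on_le) simp
  then show ?thesis by (simp add: card_PiE)
qed

theorem proposition4p3:
  fixes n :: nat
  assumes "n \<ge> 3"
  shows "chi TYPE('a::{finite,field}) (n - 1) (n choose 2) n \<ge> card (UNIV :: 'a set) ^ n - 1"
proof -
  have "finite (two_subsets n)" unfolding two_subsets_def by simp
  then obtain h where "bij_betw h {0..<card (two_subsets n)} (two_subsets n)"
    using ex_bij_betw_nat_finite by blast
  then have h: "bij_betw h {..<n choose 2} (two_subsets n)"
    by (simp add: card_two_subsets atLeast0LessThan)
  obtain \<Gamma> :: "'a mat \<Rightarrow> nat"
    where "exact_dist_coloring (n - 1) (n choose 2) n (chi TYPE('a) (n - 1) (n choose 2) n) \<Gamma>"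
    using exact_dist_coloring_chi[of "n - 1"] assms by auto
  from card_le_exact_dist_coloring[OF h this] show ?thesis by simp
qed

end
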